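(* Let $(G,w)$, $(G',w')$ be loopless vertex-weighted graphs of genus $g$ and $g'$ respectively, and let $\phi:(G,w)\to(G',w')$ be a pseudo-harmonic indexed morphism. Then, writing $v'=\phi(v)$, $$2g-2=\deg(\phi)(2g'-2)+\sum_{v\in V(G)}2\big(M_\phi(v)-1+w(v)-M_\phi(v)w'(v')\big)-\sum_{v\in V(G)}\sum_{e\in E_v(G)}(r_\phi(e)-1)$$ $$=\deg(\phi)(2g'-2)+\sum_{v\in V(G)}2\big(M_\phi(v)-1+w(v)-M_\phi(v)w'(v')\big)+\sum_{v\in V(G)}\big(val(v)-M_\phi(v)val(v')\big).$$
   Context: A vertex-weighted graph $(G,w)$ is a finite connected loopless multigraph $G$ with $w:V(G)\to\mathbb{Z}_{\ge0}$; its genus is $g(G,w)=|E(G)|-|V(G)|+1+\sum_{v}w(v)$. $E_v(G)$ is the set of edges incident to $v$ and $val(v)=|E_v(G)|$. A morphism $\phi:G\to G'$ is a map $V(G)\cup E(G)\to V(G')\cup E(G')$ with $\phi(V(G))\subseteq V(G')$ such that each edge $e$ with endpoints $v_1,v_2$ is mapped either to an edge with endpoints $\phi(v_1),\phi(v_2)$ or to the vertex $\phi(v_1)=\phi(v_2)$. An indexed morphism assigns to every $e\in E(G)$ an integer $r_\phi(e)\ge0$, with $r_\phi(e)=0$ iff $\phi(e)$ is a vertex. It is pseudo-harmonic if for every $v\in V(G)$ there is $M_\phi(v)$ such that $M_\phi(v)=\sum_{e\in E(G),\,v\in e,\,\phi(e)=e'}r_\phi(e)$ for every $e'\in E(G')$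 incident to $\phi(v)$. Its degree is $\deg(\phi)=\sum_{e\in E(G),\phi(e)=e'}r_\phi(e)$ for any $e'\in E(G')$. *)

theory Defs
  imports Main
begin

text \<open>A loopless multigraph is given by a vertex set V, an edge set E and an
endpoint map ends assigning to each edge its (two-element) set of endpoints.\<close>

definition adj :: "'e set \<Rightarrow> ('e \<Rightarrow> 'v set) \<Rightarrow> ('v \<times> 'v) set" where
  "adj E ends = {(a, b). \<exists>e\<in>E. ends e = {a, b}}"

definition loopless_graph :: "'v set \<Rightarrow> 'e set \<Rightarrow> ('e \<Rightarrow> 'v set) \<Rightarrow> bool" where
  "loopless_graph V E ends \<longleftrightarrow> finite V \<and> finite E \<and> V \<noteq> {} \<and>
     (\<forall>e\<in>E. ends e \<subseteq> V \<and> card (ends e) = 2) \<and>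
     (\<forall>u\<in>V. \<forall>v\<in>V. (u, v) \<in> (adj E ends)\<^sup>*)"

definition genus :: "'v set \<Rightarrow> 'e set \<Rightarrow> ('v \<Rightarrow> nat) \<Rightarrow> int" where
  "genus V E w = int (card E) - int (card V) + 1 + int (\<Sum>v\<in>V. w v)"

definition edges_at :: "'e set \<Rightarrow> ('e \<Rightarrow> 'v set) \<Rightarrow> 'v \<Rightarrow> 'e set" where
  "edges_at E ends v = {e\<in>E. v \<in> ends e}"

definition val :: "'e set \<Rightarrow> ('e \<Rightarrow> 'v set) \<Rightarrow> 'v \<Rightarrow> nat" where
  "val E ends v = card (edges_at E ends v)"

text \<open>A morphism: vertex map fv and a map fe sending each edge either to a vertex
(Inl) or to an edge (Inr) of the target.\<close>
definition graph_morphism ::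
  "'v set \<Rightarrow> 'e set \<Rightarrow> ('e \<Rightarrow> 'v set) \<Rightarrow> 'w set \<Rightarrow> 'f set \<Rightarrow> ('f \<Rightarrow> 'w set)
   \<Rightarrow> ('v \<Rightarrow> 'w) \<Rightarrow> ('e \<Rightarrow> 'w + 'f) \<Rightarrow> bool" where
  "graph_morphism V E ends V' E' ends' fv fe \<longleftrightarrow>
     fv ` V \<subseteq> V' \<and>
     (\<forall>e\<in>E. (\<exists>e'\<in>E'. fe e = Inr e' \<and> ends' e' = fv ` ends e) \<or>
             (\<exists>v'\<in>V'. fe e = Inl v' \<and> (\<forall>x\<in>ends e. fv x = v')))"

definition indexed_morphism ::
  "'v set \<Rightarrow> 'e set \<Rightarrow> ('e \<Rightarrow> 'v set) \<Rightarrow> 'w set \<Rightarrow> 'f set \<Rightarrow> ('f \<Rightarrow> 'w set)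
   \<Rightarrow> ('v \<Rightarrow> 'w) \<Rightarrow> ('e \<Rightarrow> 'w + 'f) \<Rightarrow> ('e \<Rightarrow> nat) \<Rightarrow> bool" where
  "indexed_morphism V E ends V' E' ends' fv fe r \<longleftrightarrow>
     graph_morphism V E ends V' E' ends' fv fe \<and>
     (\<forall>e\<in>E. r e = 0 \<longleftrightarrow> isl (fe e))"

definition loc_sum ::
  "'e set \<Rightarrow> ('e \<Rightarrow> 'v set) \<Rightarrow> ('e \<Rightarrow> 'w + 'f) \<Rightarrow> ('e \<Rightarrow> nat) \<Rightarrow> 'v \<Rightarrow> 'f \<Rightarrow> nat" where
  "loc_sum E ends fe r v e' = (\<Sum>e\<in>{e\<in>E. v \<in> ends e \<and> fe e = Inr e'}. r e)"

definition pseudo_harmonic ::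
  "'v set \<Rightarrow> 'e set \<Rightarrow> ('e \<Rightarrow> 'v set) \<Rightarrow> 'w set \<Rightarrow> 'f set \<Rightarrow> ('f \<Rightarrow> 'w set)
   \<Rightarrow> ('v \<Rightarrow> 'w) \<Rightarrow> ('e \<Rightarrow> 'w + 'f) \<Rightarrow> ('e \<Rightarrow> nat) \<Rightarrow> bool" where
  "pseudo_harmonic V E ends V' E' ends' fv fe r \<longleftrightarrow>
     indexed_morphism V E ends V' E' ends' fv fe r \<and>
     (\<forall>v\<in>V. \<exists>M. \<forall>e'\<in>E'. fv v \<in> ends' e' \<longrightarrow> loc_sum E ends fe r v e' = M)"

text \<open>M_phi(v): the common value, computed at some edge of G' incident to phi(v).\<close>
definition M_phi ::
  "'e set \<Rightarrow> ('e \<Rightarrow> 'v set) \<Rightarrow> 'f set \<Rightarrow> ('f \<Rightarrow> 'w set)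
   \<Rightarrow> ('v \<Rightarrow> 'w) \<Rightarrow> ('e \<Rightarrow> 'w + 'f) \<Rightarrow> ('e \<Rightarrow> nat) \<Rightarrow> 'v \<Rightarrow> nat" where
  "M_phi E ends E' ends' fv fe r v =
     loc_sum E ends fe r v (SOME e'. e' \<in> E' \<and> fv v \<in> ends' e')"

definition deg_phi ::
  "'e set \<Rightarrow> 'f set \<Rightarrow> ('e \<Rightarrow> 'w + 'f) \<Rightarrow> ('e \<Rightarrow> nat) \<Rightarrow> nat" where
  "deg_phi E E' fe r = (\<Sum>e\<in>{e\<in>E. fe e = Inr (SOME e'. e' \<in> E')}. r e)"

end

theory Submission
  imports Defs
begin

text \<open>Every edge of G lying over an edge e' of G' has exactly one endpoint over each endpoint v'
of e'. Counting the indices of these edges once over e' and once over the vertices above v'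
shows that the fibre degree of e' equals the sum of M over the fibre of v'. Along an edge of
G' the vertex sums therefore agree, so by connectivity all of them, and all edge fibre degrees,
equal deg(phi). Consequently a sum over V of M(v) h(phi(v)) is deg(phi) times the sum of h over
V', and the sum of all indices is deg(phi) |E'|. Together with the handshake lemma in G and G'
this reduces both formulas to the definition of the genus.\<close>

lemma sum_edges_at_swap:
  fixes f :: "'e \<Rightarrow> 'a::comm_semiring_1"
  assumes "finite V" "finite E" "\<forall>e\<in>E. ends e \<subseteq> V \<and> card (ends e) = 2"
  shows "(\<Sum>v\<in>V. \<Sum>e\<in>edges_at E ends v. f e) = (\<Sum>e\<in>E. 2 * f e)"
proof -
  have "(\<Sum>v\<in>V. \<Sum>e\<in>edges_at E ends v. f e) = (\<Sum>e\<in>E. \<Sum>v\<in>{v. v \<in> V \<and> v \<in> ends e}. f e)"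
    unfolding edges_at_def by (rule sum.swap_restrict[OF assms(1,2)])
  also have "\<dots> = (\<Sum>e\<in>E. 2 * f e)"
  proof (rule sum.cong[OF refl])
    fix e assume "e \<in> E"
    then have "{v. v \<in> V \<and> v \<in> ends e} = ends e" "card (ends e) = 2" using assms(3) by auto
    then show "(\<Sum>v\<in>{v. v \<in> V \<and> v \<in> ends e}. f e) = 2 * f e" by (simp add: mult_of_nat_commute)
  qed
  finally show ?thesis .
qed

lemma sum_val:
  assumes "finite V" "finite E" "\<forall>e\<in>E. ends e \<subseteq> V \<and> card (ends e) = 2"
  shows "(\<Sum>v\<in>V. val E ends v) = 2 * card E"
  using sum_edges_at_swap[OF assms, of "\<lambda>_. 1::nat"] by (simp add: val_def)

lemma M_phi_eq_loc_sum:
  assumes "pseudo_harmonic V E ends V' E' ends' fv fe r"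
    and "v \<in> V" "e' \<in> E'" "fv v \<in> ends' e'"
  shows "M_phi E ends E' ends' fv fe r v = loc_sum E ends fe r v e'"
proof -
  obtain M where M: "\<forall>e'\<in>E'. fv v \<in> ends' e' \<longrightarrow> loc_sum E ends fe r v e' = M"
    using assms(1,2) unfolding pseudo_harmonic_def by blast
  have "\<exists>e'. e' \<in> E' \<and> fv v \<in> ends' e'" using assms(3,4) by blast
  then have "(SOME e'. e' \<in> E' \<and> fv v \<in> ends' e') \<in> E' \<and>
             fv v \<in> ends' (SOME e'. e' \<in> E' \<and> fv v \<in> ends' e')"
    by (rule someI_ex)
  then show ?thesis unfolding M_phi_def using M assms(3,4) by simp
qed

definition fibre_degree :: "'e set \<Rightarrow> ('e \<Rightarrow> 'w + 'f) \<Rightarrow> ('e \<Rightarrow> nat) \<Rightarrow> 'f \<Rightarrow> nat" where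
  "fibre_degree E fe r e' = (\<Sum>e\<in>{e\<in>E. fe e = Inr e'}. r e)"

lemma deg_phi_eq_fibre_degree: "deg_phi E E' fe r = fibre_degree E fe r (SOME e'. e' \<in> E')"
  unfolding deg_phi_def fibre_degree_def ..

lemma endpoint_over_vertex_unique:
  assumes "graph_morphism V E ends V' E' ends' fv fe"
    and "e \<in> E" "ends e \<subseteq> V" "card (ends e) = 2"
    and "card (ends' e') = 2" "fe e = Inr e'" "v' \<in> ends' e'"
  shows "\<exists>!v. v \<in> V \<and> fv v = v' \<and> v \<in> ends e"
proof -
  have image: "ends' e' = fv ` ends e"
    using assms(1,2,6) unfolding graph_morphism_def by fastforce
  obtain a b where ab: "ends e = {a, b}" "a \<noteq> b" using assms(4) by (meson card_2_iff)
  have "fv a \<noteq> fv b" using assms(5) image ab by auto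
  then show ?thesis using image ab assms(3,7) by auto
qed

lemma fibre_degree_eq_sum_loc_sum:
  assumes "loopless_graph V E ends" "loopless_graph V' E' ends'"
    and "graph_morphism V E ends V' E' ends' fv fe"
    and "e' \<in> E'" "v' \<in> ends' e'"
  shows "fibre_degree E fe r e' = (\<Sum>v\<in>{v\<in>V. fv v = v'}. loc_sum E ends fe r v e')"
proof -
  have fin: "finite V" "finite E" and ends: "\<forall>e\<in>E. ends e \<subseteq> V \<and> card (ends e) = 2"
    using assms(1) unfolding loopless_graph_def by auto
  have card': "card (ends' e') = 2" using assms(2,4) unfolding loopless_graph_def by auto
  have "(\<Sum>v\<in>{v\<in>V. fv v = v'}. loc_sum E ends fe r v e')
      = (\<Sum>e\<in>E. \<Sum>v\<in>{v. v \<in> {v\<in>V. fv v = v'} \<and> v \<in> ends e \<and> fe e = Inr e'}. r e)"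
    unfolding loc_sum_def by (rule sum.swap_restrict) (use fin in auto)
  also have "\<dots> = (\<Sum>e\<in>E. if fe e = Inr e' then r e else 0)"
  proof (rule sum.cong[OF refl])
    fix e assume e: "e \<in> E"
    show "(\<Sum>v\<in>{v. v \<in> {v\<in>V. fv v = v'} \<and> v \<in> ends e \<and> fe e = Inr e'}. r e)
        = (if fe e = Inr e' then r e else 0)"
    proof (cases "fe e = Inr e'")
      case True
      then have "\<exists>!v. v \<in> V \<and> fv v = v' \<and> v \<in> ends e"
        using endpoint_over_vertex_unique[OF assms(3) e _ _ card' _ assms(5)] ends e
        by blast
      then obtain v where "{v. v \<in> {v\<in>V. fv v = v'} \<and> v \<in> ends e \<and> fe e = Inr e'} = {v}"
        using True by auto
      then show ?thesis using True by simp
    qed simp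
  qed
  also have "\<dots> = fibre_degree E fe r e'"
    unfolding fibre_degree_def by (simp add: sum.inter_filter[OF fin(2)])
  finally show ?thesis by simp
qed

locale pseudo_harmonic_morphism =
  fixes V :: "'v set" and E :: "'e set" and ends :: "'e \<Rightarrow> 'v set"
    and V' :: "'w set" and E' :: "'f set" and ends' :: "'f \<Rightarrow> 'w set"
    and fv :: "'v \<Rightarrow> 'w" and fe :: "'e \<Rightarrow> 'w + 'f" and r :: "'e \<Rightarrow> nat"
  assumes source: "loopless_graph V E ends"
    and target: "loopless_graph V' E' ends'"
    and target_edge_exists: "E' \<noteq> {}"
    and harmonic: "pseudo_harmonic V E ends V' E' ends' fv fe r"
begin

abbreviation M :: "'v \<Rightarrow> nat" where
  "M \<equiv> M_phi E ends E' ends' fv fe r"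

abbreviation deg :: nat where
  "deg \<equiv> deg_phi E E' fe r"

lemma finite_V: "finite V" and finite_E: "finite E"
  and ends_E: "\<forall>e\<in>E. ends e \<subseteq> V \<and> card (ends e) = 2"
  using source unfolding loopless_graph_def by auto

lemma finite_V': "finite V'" and finite_E': "finite E'"
  and ends_E': "\<forall>e'\<in>E'. ends' e' \<subseteq> V' \<and> card (ends' e') = 2"
  and connected': "\<forall>u\<in>V'. \<forall>v\<in>V'. (u, v) \<in> (adj E' ends')\<^sup>*"
  using target unfolding loopless_graph_def by auto

lemma morphism: "graph_morphism V E ends V' E' ends' fv fe"
  and index_eq_0_iff: "e \<in> E \<Longrightarrow> r e = 0 \<longleftrightarrow> isl (fe e)"
  using harmonic unfolding pseudo_harmonic_def indexed_morphism_def by auto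

lemma fibre_degree_eq_sum_M:
  assumes "e' \<in> E'" "v' \<in> ends' e'"
  shows "fibre_degree E fe r e' = (\<Sum>v\<in>{v\<in>V. fv v = v'}. M v)"
  unfolding fibre_degree_eq_sum_loc_sum[OF source target morphism assms]
  using M_phi_eq_loc_sum[OF harmonic _ assms(1)] assms(2) by simp

lemma sum_M_fibre_eq_deg:
  assumes "v' \<in> V'"
  shows "(\<Sum>v\<in>{v\<in>V. fv v = v'}. M v) = deg"
proof -
  define N where "N u = (\<Sum>v\<in>{v\<in>V. fv v = u}. M v)" for u
  have N_adj: "N a = N b" if ab: "(a, b) \<in> adj E' ends'" for a b
  proof -
    obtain e' where e': "e' \<in> E'" "ends' e' = {a, b}" using ab unfolding adj_def by auto
    then have "fibre_degree E fe r e' = N a" "fibre_degree E fe r e' = N b"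
      unfolding N_def using fibre_degree_eq_sum_M[OF e'(1)] by simp_all
    then show ?thesis by simp
  qed
  have N_reach: "N a = N b" if "(a, b) \<in> (adj E' ends')\<^sup>*" for a b
    using that by (induction rule: rtrancl_induct) (auto dest: N_adj)
  define e0 where "e0 = (SOME e'. e' \<in> E')"
  have e0: "e0 \<in> E'" unfolding e0_def using target_edge_exists by (simp add: some_in_eq)
  then obtain v0 where v0: "v0 \<in> ends' e0" using ends_E' by fastforce
  then have "v0 \<in> V'" using e0 ends_E' by auto
  then have "N v' = N v0" using N_reach[of v' v0] connected' assms by simp
  also have "\<dots> = deg"
    unfolding N_def deg_phi_eq_fibre_degree e0_def[symmetric] using fibre_degree_eq_sum_M[OF e0 v0] ..
  finally show ?thesis unfolding N_def .
qed

lemma fibre_degree_eq_deg: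
  assumes "e' \<in> E'"
  shows "fibre_degree E fe r e' = deg"
proof -
  obtain v' where "v' \<in> ends' e'" using assms ends_E' by fastforce
  then show ?thesis
    using fibre_degree_eq_sum_M[OF assms] sum_M_fibre_eq_deg assms ends_E' by auto
qed

lemma sum_M_mult_comp:
  fixes h :: "'w \<Rightarrow> nat"
  shows "(\<Sum>v\<in>V. M v * h (fv v)) = deg * (\<Sum>v'\<in>V'. h v')"
proof -
  have fv_V: "fv ` V \<subseteq> V'" using morphism unfolding graph_morphism_def by blast
  have "(\<Sum>v\<in>V. M v * h (fv v)) = (\<Sum>v'\<in>V'. \<Sum>v\<in>{v\<in>V. fv v = v'}. M v * h (fv v))"
    by (rule sum.group[symmetric]) (use finite_V finite_V' fv_V in auto)
  also have "\<dots> = (\<Sum>v'\<in>V'. (\<Sum>v\<in>{v\<in>V. fv v = v'}. M v) * h v')"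
    by (simp add: sum_distrib_right)
  also have "\<dots> = (\<Sum>v'\<in>V'. deg * h v')"
    using sum_M_fibre_eq_deg by simp
  finally show ?thesis by (simp add: sum_distrib_left)
qed

lemma sum_index_eq:
  "(\<Sum>e\<in>E. r e) = deg * card E'"
proof -
  have "(\<Sum>e'\<in>E'. fibre_degree E fe r e') = (\<Sum>e\<in>E. \<Sum>e'\<in>{e'\<in>E'. fe e = Inr e'}. r e)"
    unfolding fibre_degree_def by (rule sum.swap_restrict[OF finite_E' finite_E])
  also have "\<dots> = (\<Sum>e\<in>E. r e)"
  proof (rule sum.cong[OF refl])
    fix e assume e: "e \<in> E"
    show "(\<Sum>e'\<in>{e'\<in>E'. fe e = Inr e'}. r e) = r e"
    proof (cases "fe e")
      case (Inl v')
      then show ?thesis using index_eq_0_iff[OF e] by simp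
    next
      case (Inr e')
      then have "e' \<in> E'" using morphism e unfolding graph_morphism_def by fastforce
      then have "{e'\<in>E'. fe e = Inr e'} = {e'}" using Inr by auto
      then show ?thesis by simp
    qed
  qed
  finally show ?thesis using fibre_degree_eq_deg by (simp add: mult.commute)
qed

lemma sum_weight_terms:
  fixes w :: "'v \<Rightarrow> nat" and w' :: "'w \<Rightarrow> nat"
  shows "(\<Sum>v\<in>V. 2 * (int (M v) - 1 + int (w v) - int (M v) * int (w' (fv v))))
    = 2 * int deg * (int (card V') - int (\<Sum>v'\<in>V'. w' v'))
      - 2 * (int (card V) - int (\<Sum>v\<in>V. w v))"
proof -
  have sum_M: "(\<Sum>v\<in>V. M v) = deg * card V'" using sum_M_mult_comp[of "\<lambda>_. 1"] by simp
  have "(\<Sum>v\<in>V. 2 * (int (M v) - 1 + int (w v) - int (M v) * int (w' (fv v))))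
      = 2 * (int (\<Sum>v\<in>V. M v) - int (card V) + int (\<Sum>v\<in>V. w v)
             - int (\<Sum>v\<in>V. M v * w' (fv v)))"
    by (simp add: sum_subtractf sum.distrib sum_distrib_left[symmetric] of_nat_sum)
  also have "\<dots> = 2 * (int (deg * card V') - int (card V) + int (\<Sum>v\<in>V. w v)
             - int (deg * (\<Sum>v'\<in>V'. w' v')))"
    unfolding sum_M sum_M_mult_comp ..
  finally show ?thesis by (simp add: algebra_simps)
qed

lemma sum_ramification:
  "(\<Sum>v\<in>V. \<Sum>e\<in>edges_at E ends v. (int (r e) - 1))
    = 2 * int deg * int (card E') - 2 * int (card E)"
proof -
  have "(\<Sum>v\<in>V. \<Sum>e\<in>edges_at E ends v. (int (r e) - 1)) = (\<Sum>e\<in>E. 2 * (int (r e) - 1))"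
    by (rule sum_edges_at_swap[OF finite_V finite_E ends_E])
  also have "\<dots> = 2 * int (\<Sum>e\<in>E. r e) - 2 * int (card E)"
    by (simp add: sum_subtractf sum_distrib_left[symmetric] right_diff_distrib)
  finally show ?thesis by (simp add: sum_index_eq)
qed

lemma sum_valence_defect:
  "(\<Sum>v\<in>V. int (val E ends v) - int (M v) * int (val E' ends' (fv v)))
    = 2 * int (card E) - 2 * int deg * int (card E')"
proof -
  have "(\<Sum>v\<in>V. M v * val E' ends' (fv v)) = deg * (2 * card E')"
    using sum_M_mult_comp sum_val[OF finite_V' finite_E' ends_E'] by simp
  moreover have "(\<Sum>v\<in>V. val E ends v) = 2 * card E"
    by (rule sum_val[OF finite_V finite_E ends_E])
  moreover have "(\<Sum>v\<in>V. int (val E ends v) - int (M v) * int (val E' ends' (fv v)))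
      = int (\<Sum>v\<in>V. val E ends v) - int (\<Sum>v\<in>V. M v * val E' ends' (fv v))"
    by (simp add: sum_subtractf of_nat_sum)
  ultimately show ?thesis by simp
qed

end

theorem theorem4p8:
  fixes V :: "'v set" and E :: "'e set" and ends :: "'e \<Rightarrow> 'v set" and w :: "'v \<Rightarrow> nat"
    and V' :: "'w set" and E' :: "'f set" and ends' :: "'f \<Rightarrow> 'w set" and w' :: "'w \<Rightarrow> nat"
    and fv :: "'v \<Rightarrow> 'w" and fe :: "'e \<Rightarrow> 'w + 'f" and r :: "'e \<Rightarrow> nat"
  assumes "loopless_graph V E ends"
    and "loopless_graph V' E' ends'"
    and "E' \<noteq> {}"
    and "pseudo_harmonic V E ends V' E' ends' fv fe r"
  defines "M \<equiv> M_phi E ends E' ends' fv fe r"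
    and "d \<equiv> int (deg_phi E E' fe r)"
  shows "(2 * genus V E w - 2 =
           d * (2 * genus V' E' w' - 2)
           + (\<Sum>v\<in>V. 2 * (int (M v) - 1 + int (w v) - int (M v) * int (w' (fv v))))
           - (\<Sum>v\<in>V. \<Sum>e\<in>edges_at E ends v. (int (r e) - 1))) \<and>
         (2 * genus V E w - 2 =
           d * (2 * genus V' E' w' - 2)
           + (\<Sum>v\<in>V. 2 * (int (M v) - 1 + int (w v) - int (M v) * int (w' (fv v))))
           + (\<Sum>v\<in>V. (int (val E ends v) - int (M v) * int (val E' ends' (fv v)))))"
proof -
  interpret pseudo_harmonic_morphism V E ends V' E' ends' fv fe r
    using assms(1-4) by unfold_locales
  show ?thesis
    unfolding M_def d_def genus_def sum_weight_terms sum_ramification sum_valence_defect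
    by (simp add: algebra_simps)
qed

end
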